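(* Let $\sigma\in\{1,-1\}$, $U$ an open subset of the Weyl upper half-plane, and let $M_c(\rho,v)$ be a $2\times2$ diagonal invertible matrix function of class $C^2$ on $U$ satisfying $d(\rho\star M_c^{-1}dM_c)=0$. Let $\varphi:U\to\mathbb{C}$ be a $C^\infty$ function of the form $\frac{-\sigma(\omega-v)\pm\sqrt{(\omega-v)^2+\sigma\rho^2}}{\rho}$ (fixed $\omega\in\mathbb C$, continuous branch) with $\varphi\neq0$ and $\varphi^2+\sigma\ne0$ on $U$. Then for all $\alpha\in\mathbb{R}$, $\beta\in\mathbb{Z}$, $K\in\mathbb{R}\setminus\{0\}$, the matrix $$M=M_c\begin{bmatrix}K\rho^\alpha\varphi^\beta&0\\0&K^{-1}\rho^{-\alpha}\varphi^{-\beta}\end{bmatrix}$$ also satisfies $d(\rho\star M^{-1}dM)=0$ on $U$.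
   Context: The Weyl upper half-plane is $\{(\rho,v)\in\mathbb{R}^2:\rho>0\}$. The Hodge star acts on one-forms in $(\rho,v)$ by $\star d\rho=-\sigma\,dv$, $\star dv=d\rho$. *)

theory Defs
  imports "HOL-Analysis.Analysis"
begin

definition pd_rho :: "(real \<times> real \<Rightarrow> 'a::real_normed_vector) \<Rightarrow> real \<times> real \<Rightarrow> 'a" where
  "pd_rho f p = vector_derivative (\<lambda>t. f (t, snd p)) (at (fst p))"

definition pd_v :: "(real \<times> real \<Rightarrow> 'a::real_normed_vector) \<Rightarrow> real \<times> real \<Rightarrow> 'a" where
  "pd_v f p = vector_derivative (\<lambda>t. f (fst p, t)) (at (snd p))"

fun Ck_on :: "nat \<Rightarrow> (real \<times> real) set \<Rightarrow> (real \<times> real \<Rightarrow> 'a::real_normed_vector) \<Rightarrow> bool" where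
  "Ck_on 0 U f = continuous_on U f"
| "Ck_on (Suc k) U f =
     (continuous_on U f \<and>
      (\<forall>p\<in>U. (\<lambda>t. f (t, snd p)) differentiable (at (fst p)) \<and>
              (\<lambda>t. f (fst p, t)) differentiable (at (snd p))) \<and>
      Ck_on k U (pd_rho f) \<and> Ck_on k U (pd_v f))"

definition smooth_on :: "(real \<times> real) set \<Rightarrow> (real \<times> real \<Rightarrow> 'a::real_normed_vector) \<Rightarrow> bool" where
  "smooth_on U f = (\<forall>k. Ck_on k U f)"

definition weyl_half_plane :: "(real \<times> real) set" where
  "weyl_half_plane = {p. fst p > 0}"

text \<open>A one-form  a d\<rho> + b dv  is represented by its coefficient pair (a, b).\<close>

type_synonym 'a oneform = "(real \<times> real \<Rightarrow> 'a) \<times> (real \<times> real \<Rightarrow> 'a)"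

text \<open>Hodge star: star d\<rho> = -sigma dv, star dv = d\<rho>.\<close>
definition hodge :: "real \<Rightarrow> 'a::real_normed_vector oneform \<Rightarrow> 'a oneform" where
  "hodge \<sigma> w = ((\<lambda>p. snd w p), (\<lambda>p. - (\<sigma> *\<^sub>R fst w p)))"

text \<open>Exterior derivative of a one-form: coefficient of d\<rho> wedge dv.\<close>
definition ext_d :: "'a::real_normed_vector oneform \<Rightarrow> real \<times> real \<Rightarrow> 'a" where
  "ext_d w p = pd_rho (snd w) p - pd_v (fst w) p"

definition scale_form :: "(real \<times> real \<Rightarrow> real) \<Rightarrow> 'a::real_normed_vector oneform \<Rightarrow> 'a oneform" where
  "scale_form g w = ((\<lambda>p. g p *\<^sub>R fst w p), (\<lambda>p. g p *\<^sub>R snd w p))"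

definition log_diff :: "(real \<times> real \<Rightarrow> complex^2^2) \<Rightarrow> (complex^2^2) oneform" where
  "log_diff M = ((\<lambda>p. matrix_inv (M p) ** pd_rho M p), (\<lambda>p. matrix_inv (M p) ** pd_v M p))"

definition weyl_eq :: "real \<Rightarrow> (real \<times> real) set \<Rightarrow> (real \<times> real \<Rightarrow> complex^2^2) \<Rightarrow> bool" where
  "weyl_eq \<sigma> U M = (\<forall>p\<in>U. ext_d (scale_form fst (hodge \<sigma> (log_diff M))) p = 0)"

definition diag2 :: "complex \<Rightarrow> complex \<Rightarrow> complex^2^2" where
  "diag2 a b = (\<chi> i j. if i = j then (if i = 1 then a else b) else 0)"

end

theory Submission
  imports Defs
begin

(* For a diagonal matrix diag(n1, n2) the equation d(\<rho> \<star> M\<^sup>-\<^sup>1 dM) = 0 decouples into the scalar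
   equations  \<sigma> \<partial>\<^sub>\<rho>(\<rho> \<partial>\<^sub>\<rho> log n) + \<partial>\<^sub>v(\<rho> \<partial>\<^sub>v log n) = 0  for the entries n.  They are linear in
   log n, so their solutions are closed under products and integer powers, and c \<rho>\<^sup>\<alpha> is a solution
   since \<rho> \<partial>\<^sub>\<rho> log(c \<rho>\<^sup>\<alpha>) = \<alpha> is constant.  Finally \<phi> is a solution: it is a root of
   \<rho> \<phi>\<^sup>2 + 2\<sigma>(\<omega> - v)\<phi> - \<sigma>\<rho> = 0, and implicit differentiation gives
   \<rho> \<partial>\<^sub>\<rho> log \<phi> = (\<sigma> - \<phi>\<^sup>2)/(\<phi>\<^sup>2 + \<sigma>) and \<rho> \<partial>\<^sub>v log \<phi> = 2\<sigma>\<phi>/(\<phi>\<^sup>2 + \<sigma>),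
   for which the scalar equation becomes an identity. *)

lemma pd_rho_eqI: "((\<lambda>t. f (t, snd p)) has_vector_derivative D) (at (fst p)) \<Longrightarrow> pd_rho f p = D"
  unfolding pd_rho_def by (rule vector_derivative_at)

lemma pd_v_eqI: "((\<lambda>t. f (fst p, t)) has_vector_derivative D) (at (snd p)) \<Longrightarrow> pd_v f p = D"
  unfolding pd_v_def by (rule vector_derivative_at)

lemma has_vector_derivative_pd_rho:
  "(\<lambda>t. f (t, snd p)) differentiable (at (fst p)) \<Longrightarrow>
    ((\<lambda>t. f (t, snd p)) has_vector_derivative pd_rho f p) (at (fst p))"
  unfolding pd_rho_def by (simp add: vector_derivative_works[symmetric])

lemma has_vector_derivative_pd_v:
  "(\<lambda>t. f (fst p, t)) differentiable (at (snd p)) \<Longrightarrow>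
    ((\<lambda>t. f (fst p, t)) has_vector_derivative pd_v f p) (at (snd p))"
  unfolding pd_v_def by (simp add: vector_derivative_works[symmetric])

lemma eventually_nhds_curve_in_open:
  "open U \<Longrightarrow> (\<And>t. continuous (at t) \<gamma>) \<Longrightarrow> \<gamma> x \<in> U \<Longrightarrow> eventually (\<lambda>t. \<gamma> t \<in> U) (nhds x)"
  using eventually_nhds_in_open[of "\<gamma> -` U" x] continuous_open_vimage[of U \<gamma>] by simp

lemma has_vector_derivative_curve_cong_open:
  assumes "open U" "\<And>t. continuous (at t) \<gamma>" "\<gamma> x \<in> U" "\<And>q. q \<in> U \<Longrightarrow> f q = g q"
  shows "((\<lambda>t. f (\<gamma> t)) has_vector_derivative D) (at x) \<longleftrightarrow>
    ((\<lambda>t. g (\<gamma> t)) has_vector_derivative D) (at x)"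
proof (rule has_vector_derivative_cong_ev)
  show "eventually (\<lambda>t. t \<in> UNIV \<longrightarrow> f (\<gamma> t) = g (\<gamma> t)) (nhds x)"
    using eventually_nhds_curve_in_open[OF assms(1-3)] by eventually_elim (use assms(4) in auto)
qed (use assms in auto)

lemma has_vector_derivative_eventually_zero:
  assumes "eventually (\<lambda>t. f t = 0) (nhds x)" "(f has_vector_derivative D) (at x)"
  shows "D = 0"
proof -
  have "((\<lambda>_. 0) has_vector_derivative D) (at x)"
    using assms eventually_nhds_x_imp_x[OF assms(1)]
    by (subst has_vector_derivative_cong_ev[of _ _ f]) (auto elim: eventually_mono)
  then show ?thesis
    using vector_derivative_unique_at[OF _ has_vector_derivative_const] by blast
qed

lemma line_cong_open:
  assumes "open U" "p \<in> U" "\<And>q. q \<in> U \<Longrightarrow> f q = g q"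
  shows pd_rho_cong_open: "pd_rho f p = pd_rho g p"
    and differentiable_rho_cong_open: "(\<lambda>t. f (t, snd p)) differentiable (at (fst p)) \<longleftrightarrow>
      (\<lambda>t. g (t, snd p)) differentiable (at (fst p))"
    and pd_v_cong_open: "pd_v f p = pd_v g p"
    and differentiable_v_cong_open: "(\<lambda>t. f (fst p, t)) differentiable (at (snd p)) \<longleftrightarrow>
      (\<lambda>t. g (fst p, t)) differentiable (at (snd p))"
proof -
  have rho: "((\<lambda>t. f (t, snd p)) has_vector_derivative D) (at (fst p)) \<longleftrightarrow>
      ((\<lambda>t. g (t, snd p)) has_vector_derivative D) (at (fst p))" for D
    using assms by (intro has_vector_derivative_curve_cong_open) (auto intro: continuous_intros)
  have v: "((\<lambda>t. f (fst p, t)) has_vector_derivative D) (at (snd p)) \<longleftrightarrow>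
      ((\<lambda>t. g (fst p, t)) has_vector_derivative D) (at (snd p))" for D
    using assms by (intro has_vector_derivative_curve_cong_open) (auto intro: continuous_intros)
  show "pd_rho f p = pd_rho g p"
    unfolding pd_rho_def vector_derivative_def rho ..
  show "pd_v f p = pd_v g p"
    unfolding pd_v_def vector_derivative_def v ..
  show "(\<lambda>t. f (t, snd p)) differentiable (at (fst p)) \<longleftrightarrow>
      (\<lambda>t. g (t, snd p)) differentiable (at (fst p))"
    using rho by (metis differentiableI_vector vector_derivative_works)
  show "(\<lambda>t. f (fst p, t)) differentiable (at (snd p)) \<longleftrightarrow>
      (\<lambda>t. g (fst p, t)) differentiable (at (snd p))"
    using v by (metis differentiableI_vector vector_derivative_works)
qed

lemma diag2_mult: "diag2 a b ** diag2 c d = diag2 (a * c) (b * d)"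
  by (auto simp: vec_eq_iff diag2_def forall_2 matrix_matrix_mult_def sum_2)

lemma diag2_eq_0_iff: "diag2 a b = 0 \<longleftrightarrow> a = 0 \<and> b = 0"
  by (auto simp: vec_eq_iff diag2_def forall_2)

lemma diag2_add: "diag2 a b + diag2 c d = diag2 (a + c) (b + d)"
  by (auto simp: vec_eq_iff diag2_def forall_2)

lemma diag2_uminus: "- diag2 a b = diag2 (- a) (- b)"
  by (auto simp: vec_eq_iff diag2_def forall_2)

lemma diag2_diff: "diag2 a b - diag2 c d = diag2 (a - c) (b - d)"
  by (auto simp: vec_eq_iff diag2_def forall_2)

lemma scaleR_diag2: "r *\<^sub>R diag2 a b = diag2 (of_real r * a) (of_real r * b)"
  by (simp add: vec_eq_iff diag2_def forall_2 vector_scaleR_component) (simp add: scaleR_conv_of_real)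

lemma matrix_inv_diag2:
  assumes "a \<noteq> 0" "b \<noteq> 0"
  shows "matrix_inv (diag2 a b) = diag2 (inverse a) (inverse b)"
proof -
  let ?A = "diag2 a b" and ?B = "diag2 (inverse a) (inverse b)"
  have "mat 1 = diag2 1 1"
    by (auto simp: vec_eq_iff diag2_def forall_2 mat_def)
  then have AB: "?A ** ?B = mat 1" and BA: "?B ** ?A = mat 1"
    using assms by (simp_all add: diag2_mult)
  show ?thesis unfolding matrix_inv_def
  proof (rule someI2[where a = ?B])
    fix X assume "?A ** X = mat 1 \<and> X ** ?A = mat 1"
    moreover have "X = (X ** ?A) ** ?B"
      by (simp add: AB flip: matrix_mul_assoc)
    ultimately show "X = ?B"
      by simp
  qed (use AB BA in simp)
qed

lemma has_vector_derivative_diag2: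
  assumes "(f has_vector_derivative f') F" "(g has_vector_derivative g') F"
  shows "((\<lambda>t. diag2 (f t) (g t)) has_vector_derivative diag2 f' g') F"
proof -
  have "bounded_linear (\<lambda>a. diag2 a 0)" "bounded_linear (\<lambda>b. diag2 0 b)"
    by (auto simp: linear_conv_bounded_linear[symmetric] vec_eq_iff diag2_def forall_2
        intro!: linearI)
  from this[THEN bounded_linear.has_vector_derivative] assms
  have "((\<lambda>t. diag2 (f t) 0 + diag2 0 (g t)) has_vector_derivative diag2 f' 0 + diag2 0 g') F"
    by (intro has_vector_derivative_add)
  then show ?thesis
    by (simp add: diag2_add)
qed

definition rho_dlog_rho :: "(real \<times> real \<Rightarrow> complex) \<Rightarrow> real \<times> real \<Rightarrow> complex" where
  "rho_dlog_rho n p = of_real (fst p) * pd_rho n p / n p"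

definition rho_dlog_v :: "(real \<times> real \<Rightarrow> complex) \<Rightarrow> real \<times> real \<Rightarrow> complex" where
  "rho_dlog_v n p = of_real (fst p) * pd_v n p / n p"

definition log_regular_on :: "(real \<times> real) set \<Rightarrow> (real \<times> real \<Rightarrow> complex) \<Rightarrow> bool" where
  "log_regular_on U n \<longleftrightarrow> (\<forall>p\<in>U. n p \<noteq> 0 \<and>
     (\<lambda>t. n (t, snd p)) differentiable (at (fst p)) \<and> (\<lambda>t. n (fst p, t)) differentiable (at (snd p)) \<and>
     (\<lambda>t. rho_dlog_rho n (t, snd p)) differentiable (at (fst p)) \<and>
     (\<lambda>t. rho_dlog_v n (fst p, t)) differentiable (at (snd p)))"

(* For \<sigma> = 1 this is \<rho> times the Laplacian of log n in cylindrical coordinates (\<rho>, v),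
   applied to an axially symmetric function. *)
definition weyl_laplacian :: "real \<Rightarrow> (real \<times> real \<Rightarrow> complex) \<Rightarrow> real \<times> real \<Rightarrow> complex" where
  "weyl_laplacian \<sigma> n p = of_real \<sigma> * pd_rho (rho_dlog_rho n) p + pd_v (rho_dlog_v n) p"

definition weyl_harmonic_on :: "real \<Rightarrow> (real \<times> real) set \<Rightarrow> (real \<times> real \<Rightarrow> complex) \<Rightarrow> bool" where
  "weyl_harmonic_on \<sigma> U n \<longleftrightarrow> log_regular_on U n \<and> (\<forall>p\<in>U. weyl_laplacian \<sigma> n p = 0)"

lemma log_regular_onD:
  assumes "log_regular_on U n" "p \<in> U"
  shows "n p \<noteq> 0" "(\<lambda>t. n (t, snd p)) differentiable (at (fst p))"
    "(\<lambda>t. n (fst p, t)) differentiable (at (snd p))"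
    "(\<lambda>t. rho_dlog_rho n (t, snd p)) differentiable (at (fst p))"
    "(\<lambda>t. rho_dlog_v n (fst p, t)) differentiable (at (snd p))"
  using assms by (auto simp: log_regular_on_def)

lemma log_regular_onI:
  assumes U: "open U"
    and dlog_rho: "\<And>q. q \<in> U \<Longrightarrow> rho_dlog_rho n q = A q"
    and dlog_v: "\<And>q. q \<in> U \<Longrightarrow> rho_dlog_v n q = B q"
    and n: "\<And>p. p \<in> U \<Longrightarrow> n p \<noteq> 0 \<and> (\<lambda>t. n (t, snd p)) differentiable (at (fst p)) \<and>
      (\<lambda>t. n (fst p, t)) differentiable (at (snd p))"
    and A: "\<And>p. p \<in> U \<Longrightarrow> (\<lambda>t. A (t, snd p)) differentiable (at (fst p))"
    and B: "\<And>p. p \<in> U \<Longrightarrow> (\<lambda>t. B (fst p, t)) differentiable (at (snd p))"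
  shows "log_regular_on U n"
proof -
  have "(\<lambda>t. rho_dlog_rho n (t, snd p)) differentiable (at (fst p))"
    "(\<lambda>t. rho_dlog_v n (fst p, t)) differentiable (at (snd p))" if "p \<in> U" for p
    using A[OF that] B[OF that] differentiable_rho_cong_open[where f = "rho_dlog_rho n", OF U that dlog_rho]
      differentiable_v_cong_open[where f = "rho_dlog_v n", OF U that dlog_v] by simp_all
  then show ?thesis
    using n unfolding log_regular_on_def by blast
qed

lemma weyl_laplacian_dlog_cong:
  assumes "open U" "p \<in> U"
    and "\<And>q. q \<in> U \<Longrightarrow> rho_dlog_rho n q = A q" "\<And>q. q \<in> U \<Longrightarrow> rho_dlog_v n q = B q"
  shows "weyl_laplacian \<sigma> n p = of_real \<sigma> * pd_rho A p + pd_v B p"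
  using pd_rho_cong_open[where f = "rho_dlog_rho n", OF assms(1-3)]
    pd_v_cong_open[where f = "rho_dlog_v n", OF assms(1,2,4)]
  by (simp add: weyl_laplacian_def)

lemma ext_d_weyl_form_diag2:
  assumes U: "open U" and p: "p \<in> U"
    and N: "\<And>q. q \<in> U \<Longrightarrow> N q = diag2 (n1 q) (n2 q)"
    and n1: "log_regular_on U n1" and n2: "log_regular_on U n2"
  shows "ext_d (scale_form fst (hodge \<sigma> (log_diff N))) p =
    diag2 (- weyl_laplacian \<sigma> n1 p) (- weyl_laplacian \<sigma> n2 p)"
proof -
  let ?w = "scale_form fst (hodge \<sigma> (log_diff N))" and ?s = "complex_of_real \<sigma>"
  have "pd_rho N q = diag2 (pd_rho n1 q) (pd_rho n2 q) \<and> pd_v N q = diag2 (pd_v n1 q) (pd_v n2 q)"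
    if q: "q \<in> U" for q
  proof -
    have "pd_rho N q = pd_rho (\<lambda>q. diag2 (n1 q) (n2 q)) q" "pd_v N q = pd_v (\<lambda>q. diag2 (n1 q) (n2 q)) q"
      using N by (auto intro: pd_rho_cong_open[OF U q] pd_v_cong_open[OF U q])
    then show ?thesis
      using log_regular_onD[OF n1 q] log_regular_onD[OF n2 q]
      by (auto intro!: pd_rho_eqI pd_v_eqI has_vector_derivative_diag2
          has_vector_derivative_pd_rho has_vector_derivative_pd_v)
  qed
  then have w: "fst ?w q = diag2 (rho_dlog_v n1 q) (rho_dlog_v n2 q)"
      "snd ?w q = diag2 (- ?s * rho_dlog_rho n1 q) (- ?s * rho_dlog_rho n2 q)" if "q \<in> U" for q
    using that N log_regular_onD(1)[OF n1] log_regular_onD(1)[OF n2]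
    by (auto simp: scale_form_def hodge_def log_diff_def rho_dlog_rho_def
        rho_dlog_v_def matrix_inv_diag2 diag2_mult scaleR_diag2 diag2_uminus field_simps)
  have "pd_rho (snd ?w) p = pd_rho (\<lambda>q. diag2 (- ?s * rho_dlog_rho n1 q) (- ?s * rho_dlog_rho n2 q)) p"
    using w(2) by (rule pd_rho_cong_open[OF U p])
  also have "\<dots> = diag2 (- ?s * pd_rho (rho_dlog_rho n1) p) (- ?s * pd_rho (rho_dlog_rho n2) p)"
    using log_regular_onD[OF n1 p] log_regular_onD[OF n2 p]
    by (auto intro!: pd_rho_eqI has_vector_derivative_diag2 has_vector_derivative_minus
        has_vector_derivative_mult_right has_vector_derivative_pd_rho)
  moreover have "pd_v (fst ?w) p = pd_v (\<lambda>q. diag2 (rho_dlog_v n1 q) (rho_dlog_v n2 q)) p"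
    using w(1) by (rule pd_v_cong_open[OF U p])
  moreover have "\<dots> = diag2 (pd_v (rho_dlog_v n1) p) (pd_v (rho_dlog_v n2) p)"
    using log_regular_onD[OF n1 p] log_regular_onD[OF n2 p]
    by (auto intro!: pd_v_eqI has_vector_derivative_diag2 has_vector_derivative_pd_v)
  ultimately show ?thesis
    by (simp add: ext_d_def diag2_diff weyl_laplacian_def)
qed

lemma weyl_eq_diag2_iff:
  assumes "open U" "\<And>q. q \<in> U \<Longrightarrow> N q = diag2 (n1 q) (n2 q)"
    and "log_regular_on U n1" "log_regular_on U n2"
  shows "weyl_eq \<sigma> U N \<longleftrightarrow> weyl_harmonic_on \<sigma> U n1 \<and> weyl_harmonic_on \<sigma> U n2"
  using ext_d_weyl_form_diag2[OF assms(1) _ assms(2-4)] assms(3,4)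
  by (auto simp: weyl_eq_def weyl_harmonic_on_def diag2_eq_0_iff)

lemma rho_dlog_mult:
  assumes "log_regular_on U n" "log_regular_on U m" "p \<in> U"
  shows "rho_dlog_rho (\<lambda>q. n q * m q) p = rho_dlog_rho n p + rho_dlog_rho m p"
    and "rho_dlog_v (\<lambda>q. n q * m q) p = rho_dlog_v n p + rho_dlog_v m p"
proof -
  note n = log_regular_onD[OF assms(1,3)] and m = log_regular_onD[OF assms(2,3)]
  have "pd_rho (\<lambda>q. n q * m q) p = n p * pd_rho m p + pd_rho n p * m p"
    "pd_v (\<lambda>q. n q * m q) p = n p * pd_v m p + pd_v n p * m p"
    using has_vector_derivative_mult[OF has_vector_derivative_pd_rho[OF n(2)] has_vector_derivative_pd_rho[OF m(2)]]
      has_vector_derivative_mult[OF has_vector_derivative_pd_v[OF n(3)] has_vector_derivative_pd_v[OF m(3)]]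
    by (auto intro!: pd_rho_eqI pd_v_eqI)
  then show "rho_dlog_rho (\<lambda>q. n q * m q) p = rho_dlog_rho n p + rho_dlog_rho m p"
    and "rho_dlog_v (\<lambda>q. n q * m q) p = rho_dlog_v n p + rho_dlog_v m p"
    using n(1) m(1) by (simp_all add: rho_dlog_rho_def rho_dlog_v_def field_simps)
qed

lemma weyl_harmonic_on_mult:
  assumes U: "open U" and n: "weyl_harmonic_on \<sigma> U n" and m: "weyl_harmonic_on \<sigma> U m"
  shows "weyl_harmonic_on \<sigma> U (\<lambda>q. n q * m q)"
proof -
  have n': "log_regular_on U n" and m': "log_regular_on U m"
    using n m by (simp_all add: weyl_harmonic_on_def)
  note dlog = rho_dlog_mult[OF n' m']
  have "log_regular_on U (\<lambda>q. n q * m q)"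
    using dlog by (rule log_regular_onI[OF U]) (use log_regular_onD[OF n'] log_regular_onD[OF m'] in auto)
  moreover have "weyl_laplacian \<sigma> (\<lambda>q. n q * m q) p = 0" if p: "p \<in> U" for p
  proof -
    have "weyl_laplacian \<sigma> (\<lambda>q. n q * m q) p = of_real \<sigma> * pd_rho (\<lambda>q. rho_dlog_rho n q + rho_dlog_rho m q) p
        + pd_v (\<lambda>q. rho_dlog_v n q + rho_dlog_v m q) p"
      using dlog by (rule weyl_laplacian_dlog_cong[OF U p])
    also have "\<dots> = weyl_laplacian \<sigma> n p + weyl_laplacian \<sigma> m p"
      using log_regular_onD[OF n' p] log_regular_onD[OF m' p]
      by (simp add: weyl_laplacian_def algebra_simps pd_rho_eqI[OF has_vector_derivative_add[OF
          has_vector_derivative_pd_rho has_vector_derivative_pd_rho]] pd_v_eqI[OF has_vector_derivative_add[OF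
          has_vector_derivative_pd_v has_vector_derivative_pd_v]])
    also have "\<dots> = 0"
      using n m p by (simp add: weyl_harmonic_on_def)
    finally show ?thesis .
  qed
  ultimately show ?thesis
    by (simp add: weyl_harmonic_on_def)
qed

lemma rho_dlog_powi:
  assumes "log_regular_on U n" "p \<in> U"
  shows "rho_dlog_rho (\<lambda>q. n q powi k) p = of_int k * rho_dlog_rho n p"
    and "rho_dlog_v (\<lambda>q. n q powi k) p = of_int k * rho_dlog_v n p"
proof -
  note n = log_regular_onD[OF assms]
  have "pd_rho (\<lambda>q. n q powi k) p = pd_rho n p * (of_int k * n p powi (k - 1))"
    "pd_v (\<lambda>q. n q powi k) p = pd_v n p * (of_int k * n p powi (k - 1))"
    using field_vector_diff_chain_at[OF has_vector_derivative_pd_rho[OF n(2)] DERIV_power_int[OF DERIV_ident]]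
      field_vector_diff_chain_at[OF has_vector_derivative_pd_v[OF n(3)] DERIV_power_int[OF DERIV_ident]]
      n(1)
    by (auto intro!: pd_rho_eqI pd_v_eqI simp: o_def)
  then show "rho_dlog_rho (\<lambda>q. n q powi k) p = of_int k * rho_dlog_rho n p"
    and "rho_dlog_v (\<lambda>q. n q powi k) p = of_int k * rho_dlog_v n p"
    using n(1) by (simp_all add: rho_dlog_rho_def rho_dlog_v_def power_int_diff field_simps)
qed

lemma weyl_harmonic_on_powi:
  assumes U: "open U" and n: "weyl_harmonic_on \<sigma> U n"
  shows "weyl_harmonic_on \<sigma> U (\<lambda>q. n q powi k)"
proof -
  have n': "log_regular_on U n"
    using n by (simp add: weyl_harmonic_on_def)
  note dlog = rho_dlog_powi[OF n', of _ k]
  have "log_regular_on U (\<lambda>q. n q powi k)"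
    using dlog by (rule log_regular_onI[OF U]) (use log_regular_onD[OF n'] in auto)
  moreover have "weyl_laplacian \<sigma> (\<lambda>q. n q powi k) p = 0" if p: "p \<in> U" for p
  proof -
    have "weyl_laplacian \<sigma> (\<lambda>q. n q powi k) p = of_real \<sigma> * pd_rho (\<lambda>q. of_int k * rho_dlog_rho n q) p
        + pd_v (\<lambda>q. of_int k * rho_dlog_v n q) p"
      using dlog by (rule weyl_laplacian_dlog_cong[OF U p])
    also have "\<dots> = of_int k * weyl_laplacian \<sigma> n p"
      using log_regular_onD[OF n' p]
      by (simp add: weyl_laplacian_def algebra_simps
          pd_rho_eqI[OF has_vector_derivative_mult_right[OF has_vector_derivative_pd_rho]]
          pd_v_eqI[OF has_vector_derivative_mult_right[OF has_vector_derivative_pd_v]])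
    also have "\<dots> = 0"
      using n p by (simp add: weyl_harmonic_on_def)
    finally show ?thesis .
  qed
  ultimately show ?thesis
    by (simp add: weyl_harmonic_on_def)
qed

lemma weyl_harmonic_on_rho_powr:
  assumes U: "open U" and U_sub: "U \<subseteq> weyl_half_plane" and c: "c \<noteq> 0"
  shows "weyl_harmonic_on \<sigma> U (\<lambda>q. of_real (c * fst q powr \<alpha>))"
proof -
  let ?f = "\<lambda>q. complex_of_real (c * fst q powr \<alpha>)"
  have rho_pos: "fst q > 0" if "q \<in> U" for q
    using U_sub that by (auto simp: weyl_half_plane_def)
  have d_rho: "((\<lambda>t. ?f (t, snd q)) has_vector_derivative of_real (c * (\<alpha> * fst q powr (\<alpha> - 1))))
      (at (fst q))" if "q \<in> U" for q
    using has_vector_derivative_of_real[OF DERIV_cmult[OF has_real_derivative_powr[OF rho_pos[OF that]]]]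
    by simp
  have dlog: "rho_dlog_rho ?f q = of_real \<alpha>" "rho_dlog_v ?f q = 0" if "q \<in> U" for q
    using pd_rho_eqI[OF d_rho[OF that]] pd_v_eqI[of "?f" q 0] rho_pos[OF that] c
    by (simp_all add: rho_dlog_rho_def rho_dlog_v_def powr_diff field_simps)
  have "log_regular_on U ?f"
  proof (rule log_regular_onI[OF U dlog])
    show "?f p \<noteq> 0 \<and> (\<lambda>t. ?f (t, snd p)) differentiable (at (fst p)) \<and>
        (\<lambda>t. ?f (fst p, t)) differentiable (at (snd p))" if "p \<in> U" for p
      using rho_pos[OF that] c differentiableI_vector[OF d_rho[OF that]] by simp
  qed simp_all
  moreover have "weyl_laplacian \<sigma> ?f p = of_real \<sigma> * pd_rho (\<lambda>_. of_real \<alpha>) p + pd_v (\<lambda>_. 0) p"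
    if p: "p \<in> U" for p
    using dlog by (rule weyl_laplacian_dlog_cong[OF U p])
  ultimately show ?thesis
    using pd_rho_eqI[of "\<lambda>_. complex_of_real \<alpha>" _ 0] pd_v_eqI[of "\<lambda>_. 0 :: complex" _ 0]
    by (simp add: weyl_harmonic_on_def)
qed

lemma invertible_diagonal_nonzero:
  fixes A :: "'a::field^'n^'n"
  assumes diag: "\<And>i j. i \<noteq> j \<Longrightarrow> A $ i $ j = 0" and "invertible A"
  shows "A $ i $ i \<noteq> 0"
proof
  assume "A $ i $ i = 0"
  obtain B where "A ** B = mat 1"
    using \<open>invertible A\<close> by (auto simp: invertible_def)
  then have "(A ** B) $ i $ i = 1"
    by (simp add: mat_def)
  then have "1 = (\<Sum>k\<in>UNIV. A $ i $ k * B $ k $ i)"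
    by (simp add: matrix_matrix_mult_def)
  also have "\<dots> = 0"
  proof (intro sum.neutral ballI)
    show "A $ i $ k * B $ k $ i = 0" for k
      using diag \<open>A $ i $ i = 0\<close> by (cases "k = i") auto
  qed
  finally show False by simp
qed

lemma has_vector_derivative_entry:
  "(f has_vector_derivative f') F \<Longrightarrow> ((\<lambda>t. f t $ i $ j) has_vector_derivative f' $ i $ j) F"
  using bounded_linear_compose[OF bounded_linear_vec_nth bounded_linear_vec_nth]
  by (rule bounded_linear.has_vector_derivative[of "\<lambda>x. x $ i $ j", unfolded o_def]) 

lemma differentiable_entry:
  "f differentiable F \<Longrightarrow> (\<lambda>t. f t $ i $ j) differentiable F"
  for f :: "real \<Rightarrow> 'a::real_normed_vector^'n^'m"
  by (metis differentiableI_vector has_vector_derivative_entry vector_derivative_works)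

lemma log_regular_on_diagonal_entry:
  fixes M :: "real \<times> real \<Rightarrow> complex^'n^'n"
  assumes U: "open U" and M: "Ck_on 2 U M" and nz: "\<And>q. q \<in> U \<Longrightarrow> M q $ i $ i \<noteq> 0"
  shows "log_regular_on U (\<lambda>q. M q $ i $ i)"
proof -
  have M_diff: "(\<lambda>t. M (t, snd q)) differentiable (at (fst q))"
      "(\<lambda>t. M (fst q, t)) differentiable (at (snd q))"
      "(\<lambda>t. pd_rho M (t, snd q)) differentiable (at (fst q))"
      "(\<lambda>t. pd_v M (fst q, t)) differentiable (at (snd q))" if "q \<in> U" for q
    using M that by (auto simp: numeral_2_eq_2)
  have of_real_diff: "(\<lambda>t. complex_of_real t) differentiable (at x)" for x
    using differentiableI_vector[OF has_vector_derivative_of_real[OF DERIV_ident]] by simp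
  show ?thesis
  proof (rule log_regular_onI[OF U])
    show "rho_dlog_rho (\<lambda>q. M q $ i $ i) q = of_real (fst q) * pd_rho M q $ i $ i / M q $ i $ i"
      "rho_dlog_v (\<lambda>q. M q $ i $ i) q = of_real (fst q) * pd_v M q $ i $ i / M q $ i $ i"
      if "q \<in> U" for q
      using has_vector_derivative_entry[OF has_vector_derivative_pd_rho[OF M_diff(1)[OF that]]]
        has_vector_derivative_entry[OF has_vector_derivative_pd_v[OF M_diff(2)[OF that]]]
      by (simp_all add: rho_dlog_rho_def rho_dlog_v_def pd_rho_eqI pd_v_eqI)
  qed (use nz M_diff of_real_diff in \<open>auto intro!: differentiable_divide differentiable_mult differentiable_entry\<close>)
qed

lemma root_quadratic:
  fixes \<rho> \<sigma> :: real and f w :: complex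
  assumes "\<sigma> \<in> {1, -1}" "\<rho> \<noteq> 0"
    and "(of_real \<rho> * f + of_real \<sigma> * w)\<^sup>2 = w\<^sup>2 + of_real \<sigma> * (of_real \<rho>)\<^sup>2"
  shows "of_real \<rho> * f * f + 2 * of_real \<sigma> * w * f - of_real \<sigma> * of_real \<rho> = 0"
proof -
  have "(complex_of_real \<sigma>)\<^sup>2 = 1"
    using assms(1) by auto
  then have "of_real \<rho> * (of_real \<rho> * f * f + 2 * of_real \<sigma> * w * f - of_real \<sigma> * of_real \<rho>) =
      (of_real \<rho> * f + of_real \<sigma> * w)\<^sup>2 - (w\<^sup>2 + of_real \<sigma> * (of_real \<rho>)\<^sup>2)"
    by (simp add: algebra_simps power2_eq_square)
  then show ?thesis
    using assms(2,3) by simp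
qed

context
  fixes \<sigma> :: real and U :: "(real \<times> real) set" and \<phi> :: "real \<times> real \<Rightarrow> complex" and \<omega> :: complex
  assumes sigma: "\<sigma> \<in> {1, -1}" and U_open: "open U" and U_sub: "U \<subseteq> weyl_half_plane"
    and phi_form: "\<forall>p\<in>U. (complex_of_real (fst p) * \<phi> p + complex_of_real \<sigma> * (\<omega> - complex_of_real (snd p)))\<^sup>2
      = (\<omega> - complex_of_real (snd p))\<^sup>2 + complex_of_real \<sigma> * (complex_of_real (fst p))\<^sup>2"
    and phi_nz: "\<forall>p\<in>U. \<phi> p \<noteq> 0"
    and phi_sq: "\<forall>p\<in>U. (\<phi> p)\<^sup>2 + complex_of_real \<sigma> \<noteq> 0"
    and phi_diff: "\<forall>p\<in>U. (\<lambda>t. \<phi> (t, snd p)) differentiable (at (fst p)) \<and>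
      (\<lambda>t. \<phi> (fst p, t)) differentiable (at (snd p))"
begin

lemma root_quadratic_on:
  assumes q: "(\<rho>, v) \<in> U"
  shows "of_real \<rho> * \<phi> (\<rho>, v) * \<phi> (\<rho>, v) + 2 * of_real \<sigma> * (\<omega> - of_real v) * \<phi> (\<rho>, v)
    - of_real \<sigma> * of_real \<rho> = 0"
proof -
  have "\<rho> \<noteq> 0"
    using U_sub q by (auto simp: weyl_half_plane_def)
  then show ?thesis
    using root_quadratic[OF sigma _ phi_form[rule_format, OF q, simplified]] by simp
qed

lemma pd_rho_root:
  assumes q: "q \<in> U"
  shows "of_real (fst q) * pd_rho \<phi> q * (\<phi> q ^ 2 + of_real \<sigma>) = \<phi> q * (of_real \<sigma> - \<phi> q ^ 2)"
proof -
  obtain \<rho> v where q_eq: "q = (\<rho>, v)"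
    by fastforce
  let ?f = "\<phi> q" and ?x = "complex_of_real \<rho>" and ?s = "complex_of_real \<sigma>"
    and ?w = "\<omega> - complex_of_real v" and ?D = "pd_rho \<phi> q"
  have "((\<lambda>t. of_real t * \<phi> (t, v) * \<phi> (t, v) + 2 * ?s * ?w * \<phi> (t, v) - ?s * of_real t)
      has_vector_derivative (?x * ?f * ?D + (?x * ?D + 1 * ?f) * ?f + 2 * ?s * ?w * ?D - ?s * 1)) (at \<rho>)"
    using has_vector_derivative_pd_rho[of \<phi> q] phi_diff q q_eq
    by (auto intro!: derivative_eq_intros)
  moreover have "eventually (\<lambda>t. (t, v) \<in> U) (nhds \<rho>)"
    using q q_eq by (auto intro!: eventually_nhds_curve_in_open U_open continuous_intros)
  ultimately have "?x * ?f * ?D + (?x * ?D + 1 * ?f) * ?f + 2 * ?s * ?w * ?D - ?s * 1 = 0"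
    using root_quadratic_on by (intro has_vector_derivative_eventually_zero) (auto elim: eventually_mono)
  \<comment> \<open>\<open>?f\<close> times the differentiated quadratic minus \<open>?D\<close> times the quadratic eliminates \<open>\<omega> - v\<close>\<close>
  moreover have "?x * ?D * (?f ^ 2 + ?s) - ?f * (?s - ?f ^ 2) =
      ?f * (?x * ?f * ?D + (?x * ?D + 1 * ?f) * ?f + 2 * ?s * ?w * ?D - ?s * 1)
      - ?D * (?x * ?f * ?f + 2 * ?s * ?w * ?f - ?s * ?x)"
    by (simp add: algebra_simps power2_eq_square)
  ultimately show ?thesis
    using root_quadratic_on q q_eq by simp
qed

lemma pd_v_root:
  assumes q: "q \<in> U"
  shows "of_real (fst q) * pd_v \<phi> q * (\<phi> q ^ 2 + of_real \<sigma>) = 2 * of_real \<sigma> * \<phi> q ^ 2"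
proof -
  obtain \<rho> v where q_eq: "q = (\<rho>, v)"
    by fastforce
  let ?f = "\<phi> q" and ?x = "complex_of_real \<rho>" and ?s = "complex_of_real \<sigma>"
    and ?w = "\<omega> - complex_of_real v" and ?D = "pd_v \<phi> q"
  have "((\<lambda>t. ?x * \<phi> (\<rho>, t) * \<phi> (\<rho>, t) + 2 * ?s * (\<omega> - of_real t) * \<phi> (\<rho>, t) - ?s * ?x)
      has_vector_derivative (?x * ?f * ?D + (?x * ?D) * ?f + (2 * ?s * ?w * ?D + (2 * ?s * (0 - 1)) * ?f) - 0))
      (at v)"
    using has_vector_derivative_pd_v[of \<phi> q] phi_diff q q_eq
    by (auto intro!: derivative_eq_intros)
  moreover have "eventually (\<lambda>t. (\<rho>, t) \<in> U) (nhds v)"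
    using q q_eq by (auto intro!: eventually_nhds_curve_in_open U_open continuous_intros)
  ultimately have "?x * ?f * ?D + (?x * ?D) * ?f + (2 * ?s * ?w * ?D + (2 * ?s * (0 - 1)) * ?f) - 0 = 0"
    using root_quadratic_on by (intro has_vector_derivative_eventually_zero) (auto elim: eventually_mono)
  moreover have "?x * ?D * (?f ^ 2 + ?s) - 2 * ?s * ?f ^ 2 =
      ?f * (?x * ?f * ?D + (?x * ?D) * ?f + (2 * ?s * ?w * ?D + (2 * ?s * (0 - 1)) * ?f) - 0)
      - ?D * (?x * ?f * ?f + 2 * ?s * ?w * ?f - ?s * ?x)"
    by (simp add: algebra_simps power2_eq_square)
  ultimately show ?thesis
    using root_quadratic_on q q_eq by simp
qed

lemma rho_dlog_root:
  assumes "q \<in> U"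
  shows "rho_dlog_rho \<phi> q = (of_real \<sigma> - \<phi> q ^ 2) / (\<phi> q ^ 2 + of_real \<sigma>)"
    and "rho_dlog_v \<phi> q = 2 * of_real \<sigma> * \<phi> q / (\<phi> q ^ 2 + of_real \<sigma>)"
  using pd_rho_root[OF assms] pd_v_root[OF assms] phi_nz phi_sq assms
  by (auto simp: rho_dlog_rho_def rho_dlog_v_def field_simps power2_eq_square)

lemma weyl_harmonic_on_root: "weyl_harmonic_on \<sigma> U \<phi>"
proof -
  let ?s = "complex_of_real \<sigma>"
  let ?g = "\<lambda>z. (?s - z ^ 2) / (z ^ 2 + ?s)" and ?h = "\<lambda>z. 2 * ?s * z / (z ^ 2 + ?s)"
  have g: "(?g has_field_derivative - 4 * ?s * z / (z ^ 2 + ?s) ^ 2) (at z)"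
    and h: "(?h has_field_derivative 2 * ?s * (?s - z ^ 2) / (z ^ 2 + ?s) ^ 2) (at z)"
    if "z ^ 2 + ?s \<noteq> 0" for z
    using that by (auto intro!: derivative_eq_intros simp: field_simps power2_eq_square)
  have "log_regular_on U \<phi>"
    using rho_dlog_root by (rule log_regular_onI[OF U_open]) (use phi_nz phi_sq phi_diff in auto)
  moreover have "weyl_laplacian \<sigma> \<phi> p = 0" if p: "p \<in> U" for p
  proof -
    let ?f = "\<phi> p" and ?x = "complex_of_real (fst p)"
    define S where "S = ?f ^ 2 + ?s"
    have x: "?x \<noteq> 0"
      using U_sub p by (auto simp: weyl_half_plane_def)
    have S: "S \<noteq> 0"
      using phi_sq p by (simp add: S_def)
    have chain: "pd_rho (\<lambda>q. ?g (\<phi> q)) p = pd_rho \<phi> p * (- 4 * ?s * ?f / S ^ 2)"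
      "pd_v (\<lambda>q. ?h (\<phi> q)) p = pd_v \<phi> p * (2 * ?s * (?s - ?f ^ 2) / S ^ 2)"
      using field_vector_diff_chain_at[OF has_vector_derivative_pd_rho[of \<phi> p] g]
        field_vector_diff_chain_at[OF has_vector_derivative_pd_v[of \<phi> p] h] phi_diff p S
      by (auto intro!: pd_rho_eqI pd_v_eqI simp: o_def S_def)
    have "weyl_laplacian \<sigma> \<phi> p =
        ?s * (pd_rho \<phi> p * (- 4 * ?s * ?f / S ^ 2)) + pd_v \<phi> p * (2 * ?s * (?s - ?f ^ 2) / S ^ 2)"
      unfolding chain[symmetric] using rho_dlog_root by (rule weyl_laplacian_dlog_cong[OF U_open p])
    also have "\<dots> = (2 * ?s * (?s - ?f ^ 2) * (?x * pd_v \<phi> p * S)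
        - 4 * ?s ^ 2 * ?f * (?x * pd_rho \<phi> p * S)) / (?x * S ^ 3)"
      using x S by (simp add: field_simps power2_eq_square power3_eq_cube)
    also have "\<dots> = 0"
      unfolding S_def pd_rho_root[OF p] pd_v_root[OF p] by (simp add: algebra_simps power2_eq_square)
    finally show ?thesis .
  qed
  ultimately show ?thesis
    by (simp add: weyl_harmonic_on_def)
qed

end

theorem mainTheorem10:
  fixes \<sigma> :: real and U :: "(real \<times> real) set"
    and Mc :: "real \<times> real \<Rightarrow> complex^2^2"
    and \<phi> :: "real \<times> real \<Rightarrow> complex" and \<omega> :: complex
  assumes sigma: "\<sigma> \<in> {1, -1}"
    and U_open: "open U" and U_sub: "U \<subseteq> weyl_half_plane"
    and Mc_diag: "\<forall>p\<in>U. \<forall>i j. i \<noteq> j \<longrightarrow> Mc p $ i $ j = 0"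
    and Mc_inv: "\<forall>p\<in>U. invertible (Mc p)"
    and Mc_C2: "Ck_on 2 U Mc"
    and Mc_eq: "weyl_eq \<sigma> U Mc"
    and phi_smooth: "smooth_on U \<phi>"
    and phi_form: "\<forall>p\<in>U. (complex_of_real (fst p) * \<phi> p + complex_of_real \<sigma> * (\<omega> - complex_of_real (snd p)))\<^sup>2
                          = (\<omega> - complex_of_real (snd p))\<^sup>2 + complex_of_real \<sigma> * (complex_of_real (fst p))\<^sup>2"
    and phi_nz: "\<forall>p\<in>U. \<phi> p \<noteq> 0"
    and phi_sq: "\<forall>p\<in>U. (\<phi> p)\<^sup>2 + complex_of_real \<sigma> \<noteq> 0"
  shows "\<forall>(\<alpha>::real) (\<beta>::int) (K::real). K \<noteq> 0 \<longrightarrow>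
           weyl_eq \<sigma> U (\<lambda>p. Mc p ** diag2
              (complex_of_real (K * fst p powr \<alpha>) * \<phi> p powi \<beta>)
              (complex_of_real (inverse K * fst p powr (- \<alpha>)) * \<phi> p powi (- \<beta>)))"
proof (intro allI impI)
  fix \<alpha> :: real and \<beta> :: int and K :: real
  assume K: "K \<noteq> 0"
  have "weyl_harmonic_on \<sigma> U \<phi>"
    using phi_smooth unfolding smooth_on_def
    by (intro weyl_harmonic_on_root[OF sigma U_open U_sub phi_form phi_nz phi_sq])
      (metis Ck_on.simps(2) One_nat_def)
  then have factor: "weyl_harmonic_on \<sigma> U (\<lambda>q. of_real (c * fst q powr a) * \<phi> q powi k)"
    if "c \<noteq> 0" for c a k
    using that by (intro weyl_harmonic_on_mult weyl_harmonic_on_rho_powr weyl_harmonic_on_powi U_open U_sub)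
  define m where "m i q = Mc q $ i $ i" for i q
  have Mc_diag2: "Mc q = diag2 (m 1 q) (m 2 q)" if "q \<in> U" for q
    using Mc_diag that by (auto simp: vec_eq_iff diag2_def forall_2 m_def)
  have "log_regular_on U (m i)" for i
    unfolding m_def using Mc_diag Mc_inv
    by (intro log_regular_on_diagonal_entry U_open Mc_C2 invertible_diagonal_nonzero) auto
  then have m1: "weyl_harmonic_on \<sigma> U (m 1)" and m2: "weyl_harmonic_on \<sigma> U (m 2)"
    using Mc_eq weyl_eq_diag2_iff[OF U_open Mc_diag2] by auto
  have "weyl_harmonic_on \<sigma> U (\<lambda>q. m 1 q * (of_real (K * fst q powr \<alpha>) * \<phi> q powi \<beta>))"
    "weyl_harmonic_on \<sigma> U (\<lambda>q. m 2 q * (of_real (inverse K * fst q powr (- \<alpha>)) * \<phi> q powi (- \<beta>)))"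
    using weyl_harmonic_on_mult[OF U_open m1 factor[of K]]
      weyl_harmonic_on_mult[OF U_open m2 factor[of "inverse K"]] K
    by simp_all
  then show "weyl_eq \<sigma> U (\<lambda>p. Mc p ** diag2
      (complex_of_real (K * fst p powr \<alpha>) * \<phi> p powi \<beta>)
      (complex_of_real (inverse K * fst p powr (- \<alpha>)) * \<phi> p powi (- \<beta>)))"
    by (subst weyl_eq_diag2_iff[OF U_open]) (auto simp: Mc_diag2 diag2_mult weyl_harmonic_on_def)
qed

end
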